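(* Let $(V_A,D_A,\oplus,\ominus)$ and $(V_B,D_B,\oplus,\ominus)$ be change structures and $f:V_A\to V_B$. Let $(C,i,d)$ be a consistent incrementalization of $f$, i.e. $C$ is a type, $i:V_A\to V_B\times C$, $d:D_A\to C\to D_B\times C$, and for all $x\in V_A$, $x'\in D_A$: (1) $i_1\,x=f\,x$; (2) $f(x\oplus x')=f\,x\oplus d_1\,x'\,(i_2\,x)$; (3) $i_2(x\oplus x')=d_2\,x'\,(i_2\,x)$, where subscripts $1,2$ denote first and second components of the pair returned. Then $(C,i,d)$ is value preserving with respect to $f$: for all $x\in V_A$ and all finite lists $xs'$ of elements of $D_A$, $(\mathsf{iter}\,(C,i,d)\,x\,xs')_1=f(\mathsf{sum}\,x\,xs')$.
   Context: A change structure consists of a value type $V$, change type $D$, update $\oplus:V\to D\to V$ and difference $\ominus:V\to V\to D$ with $x\oplus(y\ominus x)=y$. The functions are defined recursively on lists: $\mathsf{iter}\,(C,i,d)\,x\,[\,]=i\,x$ and $\mathsf{iter}\,(C,i,d)\,x\,(x'::xs')=(y\oplus y',c_2)$ where $(y,c_1)=\mathsf{iter}\,(C,i,d)\,x\,xs'$ and $(y',c_2)=d\,x'\,c_1$; $\mathsf{sum}\,x\,[\,]=x$ and $\mathsf{sum}\,x\,(x'::xs')=(\mathsf{sum}\,x\,xs')\oplus x'$. *)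

theory Defs
  imports Main
begin

definition change_structure :: "('v \<Rightarrow> 'd \<Rightarrow> 'v) \<Rightarrow> ('v \<Rightarrow> 'v \<Rightarrow> 'd) \<Rightarrow> bool" where
  "change_structure upd diff \<longleftrightarrow> (\<forall>x y. upd x (diff y x) = y)"

fun iter :: "('b \<Rightarrow> 'db \<Rightarrow> 'b) \<Rightarrow> ('a \<Rightarrow> 'b \<times> 'c) \<Rightarrow> ('da \<Rightarrow> 'c \<Rightarrow> 'db \<times> 'c)
              \<Rightarrow> 'a \<Rightarrow> 'da list \<Rightarrow> 'b \<times> 'c" where
  "iter updB i d x [] = i x"
| "iter updB i d x (x' # xs') =
     (let (y, c1) = iter updB i d x xs'; (y', c2) = d x' c1 in (updB y y', c2))"

fun csum :: "('a \<Rightarrow> 'da \<Rightarrow> 'a) \<Rightarrow> 'a \<Rightarrow> 'da list \<Rightarrow> 'a" where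
  "csum updA x [] = x"
| "csum updA x (x' # xs') = updA (csum updA x xs') x'"

end

theory Submission
  imports Defs
begin

text \<open>Consistency says exactly that the initialisation i commutes with a single update:
  running d on the cache of x yields i of the updated input. Folding this along the list
  shows that iter computes i of the accumulated input, whose first component is f by (1).\<close>

lemma iter_eq_init_csum:
  assumes init_upd: "\<And>x x'. i (updA x x') =
      (updB (fst (i x)) (fst (d x' (snd (i x)))), snd (d x' (snd (i x))))"
  shows "iter updB i d x xs' = i (csum updA x xs')"
proof (induction xs')
  case Nil
  show ?case by simp
next
  case (Cons x' xs')
  then show ?case by (simp add: init_upd case_prod_beta)
qed

theorem lemma5p4:
  fixes updA :: "'a \<Rightarrow> 'da \<Rightarrow> 'a" and diffA :: "'a \<Rightarrow> 'a \<Rightarrow> 'da"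
    and updB :: "'b \<Rightarrow> 'db \<Rightarrow> 'b" and diffB :: "'b \<Rightarrow> 'b \<Rightarrow> 'db"
    and f :: "'a \<Rightarrow> 'b"
    and i :: "'a \<Rightarrow> 'b \<times> 'c" and d :: "'da \<Rightarrow> 'c \<Rightarrow> 'db \<times> 'c"
  assumes csA: "change_structure updA diffA"
    and csB: "change_structure updB diffB"
    and c1: "\<forall>x. fst (i x) = f x"
    and c2: "\<forall>x x'. f (updA x x') = updB (f x) (fst (d x' (snd (i x))))"
    and c3: "\<forall>x x'. snd (i (updA x x')) = snd (d x' (snd (i x)))"
  shows "\<forall>x xs'. fst (iter updB i d x xs') = f (csum updA x xs')"
proof -
  have "i (updA x x') = (updB (fst (i x)) (fst (d x' (snd (i x)))), snd (d x' (snd (i x))))"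
    for x x'
    using c1 c2 c3 by (simp add: prod_eq_iff)
  then have "iter updB i d x xs' = i (csum updA x xs')" for x xs'
    by (rule iter_eq_init_csum)
  then show ?thesis using c1 by simp
qed

end
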